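(* Let $k$ be an infinite field of characteristic $0$. If $(L,V)\in\mathrm{Ob}\,\Xi^0$ is a cyclic free representation and $\Phi$ is an automorphism of the category $\Xi^0$, then $\Phi(L,V)$ is also a cyclic free representation.
   Context: Representations $(L,V)$: Lie algebra $L$ over $k$ and $L$-module $V$; homomorphisms $(\varphi,\psi)$ with $\varphi$ a Lie homomorphism, $\psi$ linear, $\varphi(l)\circ\psi(v)=\psi(l\circ v)$. $W(X,Y)=(L(X),A(X)Y)$ is the free representation ($L(X)$ free Lie algebra, $A(X)$ free unital associative algebra on $X$, $A(X)Y$ free $A(X)$-module with basis $Y$). With fixed countably infinite sets $X^0,Y^0$, $\Xi^0$ is the category whose objects are the $W(X,Y)$ with finite $X\subset X^0$, $Y\subset Y^0$ and whose morphisms are all homomorphisms between them. $W(X,Y)$ is called cyclic if $X=\{x\}$ and $Y=\{y\}$ are singletons. *)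

theory Defs
  imports Main "HOL-Library.Countable_Set"
begin

text \<open>Noncommutative polynomials: functions from words over the alphabet to k
  with finite support; A(X) consists of those supported on words over X.\<close>

type_synonym ('a,'k) ncpoly = "'a list \<Rightarrow> 'k"
type_synonym ('a,'b,'k) fmodel = "'a list \<times> 'b \<Rightarrow> 'k"

definition ncpolys :: "'a set \<Rightarrow> ('a,'k::field) ncpoly set" where
  "ncpolys X = {p. finite {w. p w \<noteq> 0} \<and> (\<forall>w. p w \<noteq> 0 \<longrightarrow> set w \<subseteq> X)}"

definition nc_zero :: "('a,'k::field) ncpoly" where
  "nc_zero = (\<lambda>w. 0)"

definition nc_add :: "('a,'k::field) ncpoly \<Rightarrow> ('a,'k) ncpoly \<Rightarrow> ('a,'k) ncpoly" where
  "nc_add p q = (\<lambda>w. p w + q w)"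

definition nc_scale :: "'k::field \<Rightarrow> ('a,'k) ncpoly \<Rightarrow> ('a,'k) ncpoly" where
  "nc_scale c p = (\<lambda>w. c * p w)"

definition nc_mult :: "('a,'k::field) ncpoly \<Rightarrow> ('a,'k) ncpoly \<Rightarrow> ('a,'k) ncpoly" where
  "nc_mult p q = (\<lambda>w. \<Sum>i\<le>length w. p (take i w) * q (drop i w))"

definition nc_gen :: "'a \<Rightarrow> ('a,'k::field) ncpoly" where
  "nc_gen x = (\<lambda>w. if w = [x] then 1 else 0)"

definition nc_bracket :: "('a,'k::field) ncpoly \<Rightarrow> ('a,'k) ncpoly \<Rightarrow> ('a,'k) ncpoly" where
  "nc_bracket p q = (\<lambda>w. nc_mult p q w - nc_mult q p w)"

section \<open>Free Lie algebra L(X), realised as the Lie subalgebra of A(X) generated by X\<close>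

inductive_set lie_elems :: "'a set \<Rightarrow> ('a,'k::field) ncpoly set" for X where
  gen: "x \<in> X \<Longrightarrow> nc_gen x \<in> lie_elems X"
| zero: "nc_zero \<in> lie_elems X"
| add: "p \<in> lie_elems X \<Longrightarrow> q \<in> lie_elems X \<Longrightarrow> nc_add p q \<in> lie_elems X"
| scale: "p \<in> lie_elems X \<Longrightarrow> nc_scale c p \<in> lie_elems X"
| bracket: "p \<in> lie_elems X \<Longrightarrow> q \<in> lie_elems X \<Longrightarrow> nc_bracket p q \<in> lie_elems X"

section \<open>Free A(X)-module A(X)Y with basis Y\<close>

definition fmod :: "'a set \<Rightarrow> 'b set \<Rightarrow> ('a,'b,'k::field) fmodel set" where
  "fmod X Y = {m. finite {wy. m wy \<noteq> 0} \<and>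
      (\<forall>w y. m (w, y) \<noteq> 0 \<longrightarrow> set w \<subseteq> X \<and> y \<in> Y)}"

definition fm_zero :: "('a,'b,'k::field) fmodel" where
  "fm_zero = (\<lambda>wy. 0)"

definition fm_add :: "('a,'b,'k::field) fmodel \<Rightarrow> ('a,'b,'k) fmodel \<Rightarrow> ('a,'b,'k) fmodel" where
  "fm_add m n = (\<lambda>wy. m wy + n wy)"

definition fm_scale :: "'k::field \<Rightarrow> ('a,'b,'k) fmodel \<Rightarrow> ('a,'b,'k) fmodel" where
  "fm_scale c m = (\<lambda>wy. c * m wy)"

definition fm_act :: "('a,'k::field) ncpoly \<Rightarrow> ('a,'b,'k) fmodel \<Rightarrow> ('a,'b,'k) fmodel" where
  "fm_act p m = (\<lambda>(w, y). \<Sum>i\<le>length w. p (take i w) * m (drop i w, y))"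

text \<open>Maps are represented extensionally: they are 0 outside their domain.\<close>

definition lie_hom_on :: "'a set \<Rightarrow> 'a set \<Rightarrow> (('a,'k::field) ncpoly \<Rightarrow> ('a,'k) ncpoly) \<Rightarrow> bool" where
  "lie_hom_on X X' \<phi> \<longleftrightarrow>
     (\<forall>p\<in>lie_elems X. \<phi> p \<in> lie_elems X') \<and>
     (\<forall>p. p \<notin> lie_elems X \<longrightarrow> \<phi> p = nc_zero) \<and>
     (\<forall>p\<in>lie_elems X. \<forall>q\<in>lie_elems X. \<phi> (nc_add p q) = nc_add (\<phi> p) (\<phi> q)) \<and>
     (\<forall>c. \<forall>p\<in>lie_elems X. \<phi> (nc_scale c p) = nc_scale c (\<phi> p)) \<and>
     (\<forall>p\<in>lie_elems X. \<forall>q\<in>lie_elems X. \<phi> (nc_bracket p q) = nc_bracket (\<phi> p) (\<phi> q))"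

definition lin_on_fmod :: "'a set \<Rightarrow> 'b set \<Rightarrow> 'a set \<Rightarrow> 'b set
     \<Rightarrow> (('a,'b,'k::field) fmodel \<Rightarrow> ('a,'b,'k) fmodel) \<Rightarrow> bool" where
  "lin_on_fmod X Y X' Y' \<psi> \<longleftrightarrow>
     (\<forall>m\<in>fmod X Y. \<psi> m \<in> fmod X' Y') \<and>
     (\<forall>m. m \<notin> fmod X Y \<longrightarrow> \<psi> m = fm_zero) \<and>
     (\<forall>m\<in>fmod X Y. \<forall>n\<in>fmod X Y. \<psi> (fm_add m n) = fm_add (\<psi> m) (\<psi> n)) \<and>
     (\<forall>c. \<forall>m\<in>fmod X Y. \<psi> (fm_scale c m) = fm_scale c (\<psi> m))"

definition rep_hom :: "'a set \<Rightarrow> 'b set \<Rightarrow> 'a set \<Rightarrow> 'b set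
     \<Rightarrow> (('a,'k::field) ncpoly \<Rightarrow> ('a,'k) ncpoly)
     \<Rightarrow> (('a,'b,'k) fmodel \<Rightarrow> ('a,'b,'k) fmodel) \<Rightarrow> bool" where
  "rep_hom X Y X' Y' \<phi> \<psi> \<longleftrightarrow>
     lie_hom_on X X' \<phi> \<and> lin_on_fmod X Y X' Y' \<psi> \<and>
     (\<forall>l\<in>lie_elems X. \<forall>v\<in>fmod X Y. fm_act (\<phi> l) (\<psi> v) = \<psi> (fm_act l v))"

type_synonym ('a,'b) xobj = "'a set \<times> 'b set"
type_synonym ('a,'b,'k) xmor =
  "('a,'b) xobj \<times> ('a,'b) xobj \<times> (('a,'k) ncpoly \<Rightarrow> ('a,'k) ncpoly)
     \<times> (('a,'b,'k) fmodel \<Rightarrow> ('a,'b,'k) fmodel)"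

text \<open>Objects: W(X,Y) for finite X \<subseteq> X0, Y \<subseteq> Y0, identified with the pair (X,Y).\<close>
definition xi_obj :: "'a set \<Rightarrow> 'b set \<Rightarrow> ('a,'b) xobj set" where
  "xi_obj X0 Y0 = {(X, Y). finite X \<and> X \<subseteq> X0 \<and> finite Y \<and> Y \<subseteq> Y0}"

definition xi_hom :: "'a set \<Rightarrow> 'b set \<Rightarrow> ('a,'b) xobj \<Rightarrow> ('a,'b) xobj \<Rightarrow> ('a,'b,'k::field) xmor set" where
  "xi_hom X0 Y0 A B = {(A', B', \<phi>, \<psi>). A' = A \<and> B' = B \<and> A \<in> xi_obj X0 Y0 \<and> B \<in> xi_obj X0 Y0 \<and>
       rep_hom (fst A) (snd A) (fst B) (snd B) \<phi> \<psi>}"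

definition xi_mor :: "'a set \<Rightarrow> 'b set \<Rightarrow> ('a,'b,'k::field) xmor set" where
  "xi_mor X0 Y0 = (\<Union>A\<in>xi_obj X0 Y0. \<Union>B\<in>xi_obj X0 Y0. xi_hom X0 Y0 A B)"

definition xi_id :: "('a,'b) xobj \<Rightarrow> ('a,'b,'k::field) xmor" where
  "xi_id A = (A, A, (\<lambda>p. if p \<in> lie_elems (fst A) then p else nc_zero),
                    (\<lambda>m. if m \<in> fmod (fst A) (snd A) then m else fm_zero))"

text \<open>\<open>xi_comp g f\<close> is g \<circ> f (first f, then g).\<close>
definition xi_comp :: "('a,'b,'k::field) xmor \<Rightarrow> ('a,'b,'k) xmor \<Rightarrow> ('a,'b,'k) xmor" where
  "xi_comp g f = (case f of (A, B, \<phi>, \<psi>) \<Rightarrow> case g of (B', C, \<phi>', \<psi>') \<Rightarrow>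
                   (A, C, \<phi>' \<circ> \<phi>, \<psi>' \<circ> \<psi>))"

definition xi_functor :: "'a set \<Rightarrow> 'b set
     \<Rightarrow> (('a,'b) xobj \<Rightarrow> ('a,'b) xobj) \<Rightarrow> (('a,'b,'k::field) xmor \<Rightarrow> ('a,'b,'k) xmor) \<Rightarrow> bool" where
  "xi_functor X0 Y0 Fo Fm \<longleftrightarrow>
     (\<forall>A\<in>xi_obj X0 Y0. Fo A \<in> xi_obj X0 Y0) \<and>
     (\<forall>A\<in>xi_obj X0 Y0. \<forall>B\<in>xi_obj X0 Y0. \<forall>f\<in>xi_hom X0 Y0 A B. Fm f \<in> xi_hom X0 Y0 (Fo A) (Fo B)) \<and>
     (\<forall>A\<in>xi_obj X0 Y0. Fm (xi_id A) = xi_id (Fo A)) \<and>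
     (\<forall>A\<in>xi_obj X0 Y0. \<forall>B\<in>xi_obj X0 Y0. \<forall>C\<in>xi_obj X0 Y0.
        \<forall>f\<in>xi_hom X0 Y0 A B. \<forall>g\<in>xi_hom X0 Y0 B C.
          Fm (xi_comp g f) = xi_comp (Fm g) (Fm f))"

definition xi_automorphism :: "'a set \<Rightarrow> 'b set
     \<Rightarrow> (('a,'b) xobj \<Rightarrow> ('a,'b) xobj) \<Rightarrow> (('a,'b,'k::field) xmor \<Rightarrow> ('a,'b,'k) xmor) \<Rightarrow> bool" where
  "xi_automorphism X0 Y0 Fo Fm \<longleftrightarrow>
     xi_functor X0 Y0 Fo Fm \<and>
     (\<exists>Go Gm. xi_functor X0 Y0 Go Gm \<and>
        (\<forall>A\<in>xi_obj X0 Y0. Go (Fo A) = A \<and> Fo (Go A) = A) \<and>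
        (\<forall>f\<in>(xi_mor X0 Y0 :: ('a,'b,'k) xmor set). Gm (Fm f) = f \<and> Fm (Gm f) = f))"

definition cyclic :: "('a,'b) xobj \<Rightarrow> bool" where
  "cyclic A \<longleftrightarrow> (\<exists>x y. A = ({x}, {y}))"

end

theory Submission
  imports Defs
begin

text \<open>Being cyclic is a categorical property of objects of \<open>\<Xi>\<^sup>0\<close>. The zero object is
  \<open>W({},{})\<close>, and the objects \<open>W(X,Y)\<close> with \<open>X\<close> and \<open>Y\<close> nonempty are the nonzero objects
  \<open>A\<close> such that every \<open>B\<close> with a unique morphism \<open>A \<rightarrow> B\<close> is zero. A cyclic object
  \<open>W({x},{y})\<close> is of this kind, and its remaining nonzero retracts, \<open>W({x},{})\<close> and
  \<open>W({},{y})\<close>, have no proper nonzero retracts, being one-dimensional. Conversely, if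
  \<open>x1 \<noteq> x2\<close> lie in \<open>X\<close>, then \<open>W({x1},{})\<close> is a proper retract of the retract \<open>W(X,{})\<close>
  of \<open>W(X,Y)\<close>, split by taking the coefficient of the letter \<open>x1\<close>; similarly for \<open>Y\<close>.
  All these notions are phrased through hom-sets, identities and composition, so an
  automorphism of \<open>\<Xi>\<^sup>0\<close> preserves them.\<close>

section \<open>Free Lie algebras and free modules\<close>

lemma lie_elems_const_coeff: "p \<in> lie_elems X \<Longrightarrow> p [] = 0"
  by (induction rule: lie_elems.induct)
     (auto simp: nc_gen_def nc_zero_def nc_add_def nc_scale_def nc_bracket_def nc_mult_def)

lemma lie_elems_mono: "p \<in> lie_elems X \<Longrightarrow> X \<subseteq> X' \<Longrightarrow> p \<in> lie_elems X'"
  by (induction rule: lie_elems.induct) (auto intro: lie_elems.intros)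

lemma nc_scale_zero [simp]: "nc_scale c nc_zero = nc_zero"
  and nc_scale_0 [simp]: "nc_scale 0 p = nc_zero"
  and nc_scale_1 [simp]: "nc_scale 1 p = p"
  by (simp_all add: nc_scale_def nc_zero_def)

lemma fm_scale_zero [simp]: "fm_scale c fm_zero = fm_zero"
  and fm_scale_0 [simp]: "fm_scale 0 m = fm_zero"
  and fm_scale_1 [simp]: "fm_scale 1 m = m"
  by (simp_all add: fm_scale_def fm_zero_def)

lemma nc_zero_apply: "nc_zero w = 0"
  and fm_zero_apply: "fm_zero wy = 0"
  by (simp_all add: nc_zero_def fm_zero_def)

lemma nc_add_zero [simp]: "nc_add nc_zero nc_zero = nc_zero"
  and nc_bracket_zero [simp]: "nc_bracket nc_zero nc_zero = nc_zero"
  and fm_add_zero [simp]: "fm_add fm_zero fm_zero = fm_zero"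
  by (simp_all add: nc_add_def nc_bracket_def nc_mult_def nc_zero_def fm_add_def fm_zero_def)

lemma fm_act_nc_zero [simp]: "fm_act nc_zero m = fm_zero"
  and fm_act_fm_zero [simp]: "fm_act p fm_zero = fm_zero"
  by (simp_all add: fm_act_def nc_zero_def fm_zero_def fun_eq_iff split: prod.split)

lemma nc_gen_Nil: "nc_gen x [] = 0"
  and nc_gen_self: "nc_gen x [x] = 1"
  by (simp_all add: nc_gen_def)

lemma nc_gen_neq_zero: "nc_gen x \<noteq> nc_zero"
proof
  assume "nc_gen x = nc_zero"
  from fun_cong[OF this, of "[x]"] show False by (simp add: nc_gen_def nc_zero_def)
qed

lemma nc_bracket_scale_same: "nc_bracket (nc_scale a p) (nc_scale b p) = nc_zero"
  by (simp add: nc_bracket_def nc_mult_def nc_scale_def nc_zero_def mult_ac)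

lemma lie_elems_empty: "lie_elems {} = {nc_zero}"
proof -
  have "p = nc_zero" if "p \<in> lie_elems {}" for p :: "('a,'k::field) ncpoly"
    using that by (induction rule: lie_elems.induct) (auto simp: nc_bracket_def nc_mult_def
        nc_add_def nc_zero_def nc_scale_def)
  then show ?thesis using lie_elems.zero by blast
qed

lemma lie_elems_singleton: "lie_elems {x} = range (\<lambda>c. nc_scale c (nc_gen x))"
proof -
  have "\<exists>c. p = nc_scale c (nc_gen x)" if "p \<in> lie_elems {x}" for p :: "('a,'k::field) ncpoly"
    using that
  proof (induction rule: lie_elems.induct)
    case (add p q)
    then obtain a b where "p = nc_scale a (nc_gen x)" "q = nc_scale b (nc_gen x)" by blast
    then show ?case
      by (intro exI[of _ "a + b"]) (simp add: nc_add_def nc_scale_def fun_eq_iff distrib_right)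
  next
    case (scale p c)
    then obtain a where "p = nc_scale a (nc_gen x)" by blast
    then show ?case by (intro exI[of _ "c * a"]) (simp add: nc_scale_def fun_eq_iff)
  next
    case (bracket p q)
    then show ?case using nc_bracket_scale_same by (metis nc_scale_0)
  next
    case (gen y)
    then show ?case by (intro exI[of _ 1]) simp
  next
    case zero
    show ?case by (intro exI[of _ 0]) simp
  qed
  moreover have "nc_scale c (nc_gen x) \<in> lie_elems {x}" for c :: "'k::field"
    by (intro lie_elems.intros) simp
  ultimately show ?thesis by blast
qed

lemma fmod_support_subset:
  assumes "m \<in> fmod X Y" "n \<in> fmod X Y" and "\<And>wy. r wy \<noteq> 0 \<Longrightarrow> m wy \<noteq> 0 \<or> n wy \<noteq> 0"
  shows "r \<in> fmod X Y"
proof -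
  have "{wy. r wy \<noteq> 0} \<subseteq> {wy. m wy \<noteq> 0} \<union> {wy. n wy \<noteq> 0}" using assms(3) by blast
  moreover have "finite ({wy. m wy \<noteq> 0} \<union> {wy. n wy \<noteq> 0})"
    using assms(1,2) by (simp add: fmod_def)
  ultimately have "finite {wy. r wy \<noteq> 0}" by (rule finite_subset)
  then show ?thesis using assms unfolding fmod_def by blast
qed

lemma fmod_supportD: "m \<in> fmod X Y \<Longrightarrow> m (w, y) \<noteq> 0 \<Longrightarrow> set w \<subseteq> X \<and> y \<in> Y"
  by (simp add: fmod_def)

lemma fmodI:
  "finite {wy. m wy \<noteq> 0} \<Longrightarrow> (\<And>w y. m (w, y) \<noteq> 0 \<Longrightarrow> set w \<subseteq> X \<and> y \<in> Y) \<Longrightarrow> m \<in> fmod X Y"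
  by (simp add: fmod_def)

lemma fm_zero_fmod [simp]: "fm_zero \<in> fmod X Y"
  by (simp add: fmod_def fm_zero_def)

lemma fm_add_fmod: "m \<in> fmod X Y \<Longrightarrow> n \<in> fmod X Y \<Longrightarrow> fm_add m n \<in> fmod X Y"
  by (rule fmod_support_subset[of m _ _ n]) (auto simp: fm_add_def)

lemma fm_scale_fmod: "m \<in> fmod X Y \<Longrightarrow> fm_scale c m \<in> fmod X Y"
  by (rule fmod_support_subset[of m _ _ m]) (auto simp: fm_scale_def)

lemma fmod_mono:
  assumes "m \<in> fmod X Y" "X \<subseteq> X'" "Y \<subseteq> Y'" shows "m \<in> fmod X' Y'"
proof -
  have "set w \<subseteq> X' \<and> y \<in> Y'" if "m (w, y) \<noteq> 0" for w y
  proof -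
    from assms(1) that have "set w \<subseteq> X \<and> y \<in> Y" by (simp add: fmod_def)
    then show ?thesis using assms(2,3) by blast
  qed
  then show ?thesis using assms(1) by (simp add: fmod_def)
qed

lemma fmod_empty: "fmod X {} = {fm_zero}"
  unfolding fmod_def fm_zero_def by (auto simp: fun_eq_iff)

definition fm_basis :: "'b \<Rightarrow> ('a,'b,'k::field) fmodel" where
  "fm_basis y = (\<lambda>wz. if wz = ([], y) then 1 else 0)"

lemma fm_basis_fmod:
  assumes "y \<in> Y" shows "(fm_basis y :: ('a,'b,'k::field) fmodel) \<in> fmod X Y"
proof -
  have "{wz. (fm_basis y :: ('a,'b,'k) fmodel) wz \<noteq> 0} \<subseteq> {([],y)}"
    by (auto simp: fm_basis_def split: if_splits)
  then have "finite {wz. (fm_basis y :: ('a,'b,'k) fmodel) wz \<noteq> 0}"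
    by (rule finite_subset) simp
  then show ?thesis using assms by (simp add: fmod_def fm_basis_def)
qed

lemma fm_basis_self: "fm_basis y ([], y) = 1"
  by (simp add: fm_basis_def)

lemma fm_basis_neq_zero: "fm_basis y \<noteq> fm_zero"
proof
  assume "fm_basis y = fm_zero"
  from fun_cong[OF this, of "([], y)"] show False by (simp add: fm_basis_def fm_zero_def)
qed

lemma fmod_empty_singleton: "fmod {} {y} = range (\<lambda>c. fm_scale c (fm_basis y))"
proof -
  have "m = fm_scale (m ([], y)) (fm_basis y)" if m: "m \<in> fmod {} {y}" for m :: "('a,'b,'k::field) fmodel"
  proof
    fix wz :: "'a list \<times> 'b"
    obtain w z where wz: "wz = (w, z)" by (cases wz)
    show "m wz = fm_scale (m ([], y)) (fm_basis y) wz"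
    proof (cases "w = [] \<and> z = y")
      case False
      then have "m (w, z) = 0" using m unfolding fmod_def by auto
      then show ?thesis using False by (auto simp: wz fm_scale_def fm_basis_def)
    qed (auto simp: wz fm_scale_def fm_basis_def)
  qed
  moreover have "fm_scale c (fm_basis y) \<in> fmod {} {y}" for c :: "'k::field"
    by (simp add: fm_scale_fmod fm_basis_fmod)
  ultimately show ?thesis by blast
qed

lemma fm_act_nc_gen:
  fixes m :: "('a,'b,'k::field) fmodel"
  shows "fm_act (nc_gen x) m (w, z) = (case w of [] \<Rightarrow> 0 | a # w' \<Rightarrow> if a = x then m (w', z) else 0)"
proof (cases w)
  case (Cons a w')
  have "fm_act (nc_gen x) m (w, z) =
        (\<Sum>i\<le>length w'. (nc_gen x (a # take i w') :: 'k) * m (drop i w', z))"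
    unfolding fm_act_def Cons
    by (simp only: prod.case length_Cons sum.atMost_Suc_shift) (simp add: nc_gen_Nil)
  also have "\<dots> = (\<Sum>i\<le>length w'. if i = 0 then (if a = x then m (w', z) else 0) else 0)"
    by (rule sum.cong) (auto simp: nc_gen_def)
  finally show ?thesis using Cons by simp
qed (simp add: fm_act_def nc_gen_def)

lemma fmod_singleton_decomp:
  assumes m: "m \<in> fmod {x} {y}"
  defines "m' \<equiv> \<lambda>(w, z). m (x # w, z)"
  shows "m' \<in> fmod {x} {y}" and "fm_act (nc_gen x) m' \<in> fmod {x} {y}"
    and "m = fm_add (fm_scale (m ([], y)) (fm_basis y)) (fm_act (nc_gen x) m')"
proof -
  have "{wz. m' wz \<noteq> 0} \<subseteq> (\<lambda>(w, z). (tl w, z)) ` {wz. m wz \<noteq> 0}"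
    by (force simp: m'_def)
  moreover have "set w \<subseteq> {x} \<and> z \<in> {y}" if "m' (w, z) \<noteq> 0" for w z
  proof -
    from that have "m (x # w, z) \<noteq> 0" by (simp add: m'_def)
    from fmod_supportD[OF m this] show ?thesis by simp
  qed
  ultimately show "m' \<in> fmod {x} {y}"
    using m unfolding fmod_def by (blast intro: finite_subset)
  have "m ([], z) = 0" if "z \<noteq> y" for z
    using that fmod_supportD[OF m, of "[]" z] by auto
  moreover have "m (a # w, z) = 0" if "a \<noteq> x" for a w z
    using that fmod_supportD[OF m, of "a # w" z] by auto
  ultimately have act: "fm_act (nc_gen x) m' (w, z) = (if w = [] then 0 else m (w, z))" for w z
    by (auto simp: fm_act_nc_gen m'_def split: list.split)
  show "fm_act (nc_gen x) m' \<in> fmod {x} {y}"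
    by (rule fmod_support_subset[OF m m]) (auto simp: act split: if_splits)
  show "m = fm_add (fm_scale (m ([], y)) (fm_basis y)) (fm_act (nc_gen x) m')"
    using \<open>\<And>z. z \<noteq> y \<Longrightarrow> m ([], z) = 0\<close>
    by (auto simp: fun_eq_iff act fm_add_def fm_scale_def fm_basis_def)
qed

lemma fm_act_lie_elems_Nil: "l \<in> lie_elems X \<Longrightarrow> fm_act l m ([], z) = 0"
  by (simp add: fm_act_def lie_elems_const_coeff)

definition lie_restrict :: "'a set \<Rightarrow> (('a,'k::field) ncpoly \<Rightarrow> ('a,'k) ncpoly)
    \<Rightarrow> ('a,'k) ncpoly \<Rightarrow> ('a,'k) ncpoly" where
  "lie_restrict X L = (\<lambda>p. if p \<in> lie_elems X then L p else nc_zero)"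

definition fmod_restrict :: "'a set \<Rightarrow> 'b set \<Rightarrow> (('a,'b,'k::field) fmodel \<Rightarrow> ('a,'b,'k) fmodel)
    \<Rightarrow> ('a,'b,'k) fmodel \<Rightarrow> ('a,'b,'k) fmodel" where
  "fmod_restrict X Y L = (\<lambda>m. if m \<in> fmod X Y then L m else fm_zero)"

lemma lie_restrict_inverseD: "\<phi>r \<circ> \<phi>s = lie_restrict X id \<Longrightarrow> p \<in> lie_elems X \<Longrightarrow> \<phi>r (\<phi>s p) = p"
  by (metis comp_apply id_apply lie_restrict_def)

lemma fmod_restrict_inverseD: "\<psi>r \<circ> \<psi>s = fmod_restrict X Y id \<Longrightarrow> m \<in> fmod X Y \<Longrightarrow> \<psi>r (\<psi>s m) = m"
  by (metis comp_apply id_apply fmod_restrict_def)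

lemma xi_id_eq [simp]: "xi_id (X, Y) = ((X, Y), (X, Y), lie_restrict X id, fmod_restrict X Y id)"
  by (simp add: xi_id_def lie_restrict_def fmod_restrict_def id_def)

lemma xi_comp_eq [simp]: "xi_comp (B', C, \<phi>', \<psi>') (A, B, \<phi>, \<psi>) = (A, C, \<phi>' \<circ> \<phi>, \<psi>' \<circ> \<psi>)"
  by (simp add: xi_comp_def)

lemma lie_hom_on_restrict:
  assumes "\<And>p. p \<in> lie_elems X \<Longrightarrow> L p \<in> lie_elems X'"
    and "\<And>p q. p \<in> lie_elems X \<Longrightarrow> q \<in> lie_elems X \<Longrightarrow> L (nc_add p q) = nc_add (L p) (L q)"
    and "\<And>c p. p \<in> lie_elems X \<Longrightarrow> L (nc_scale c p) = nc_scale c (L p)"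
    and "\<And>p q. p \<in> lie_elems X \<Longrightarrow> q \<in> lie_elems X \<Longrightarrow> L (nc_bracket p q) = nc_bracket (L p) (L q)"
  shows "lie_hom_on X X' (lie_restrict X L)"
  using assms by (simp add: lie_hom_on_def lie_restrict_def lie_elems.intros)

lemma lin_on_fmod_restrict:
  assumes "\<And>m. m \<in> fmod X Y \<Longrightarrow> L m \<in> fmod X' Y'"
    and "\<And>m n. L (fm_add m n) = fm_add (L m) (L n)" and "\<And>c m. L (fm_scale c m) = fm_scale c (L m)"
  shows "lin_on_fmod X Y X' Y' (fmod_restrict X Y L)"
  using assms by (simp add: lin_on_fmod_def fmod_restrict_def fm_add_fmod fm_scale_fmod)

lemma lie_hom_on_zero: "lie_hom_on X X' \<phi> \<Longrightarrow> \<phi> nc_zero = nc_zero"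
  unfolding lie_hom_on_def by (metis lie_elems.zero nc_scale_0)

lemma lin_on_fmod_zero: "lin_on_fmod X Y X' Y' \<psi> \<Longrightarrow> \<psi> fm_zero = fm_zero"
  unfolding lin_on_fmod_def by (metis fm_zero_fmod fm_scale_0)

lemma lie_hom_on_trivial:
  assumes "lie_hom_on X X' \<phi>" and "X = {} \<or> X' = {}"
  shows "\<phi> = (\<lambda>_. nc_zero)"
proof
  fix p
  show "\<phi> p = nc_zero"
    using assms lie_hom_on_zero[OF assms(1)] lie_elems_empty unfolding lie_hom_on_def
    by (cases "p \<in> lie_elems X") auto
qed

lemma lin_on_fmod_trivial:
  assumes "lin_on_fmod X Y X' Y' \<psi>" and "Y = {} \<or> Y' = {}"
  shows "\<psi> = (\<lambda>_. fm_zero)"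
proof
  fix m
  show "\<psi> m = fm_zero"
    using assms lin_on_fmod_zero[OF assms(1)] fmod_empty unfolding lin_on_fmod_def
    by (cases "m \<in> fmod X Y") auto
qed

lemma rep_hom_zero_module:
  "rep_hom X Y X' Y' \<phi> (\<lambda>_. fm_zero) \<longleftrightarrow> lie_hom_on X X' \<phi>"
  by (simp add: rep_hom_def lin_on_fmod_def)

lemma rep_hom_zero_lie:
  "rep_hom X Y X' Y' (\<lambda>_. nc_zero) \<psi> \<longleftrightarrow>
     lin_on_fmod X Y X' Y' \<psi> \<and> (\<forall>l\<in>lie_elems X. \<forall>v\<in>fmod X Y. \<psi> (fm_act l v) = fm_zero)"
  by (auto simp: rep_hom_def lie_hom_on_def lie_elems.zero)

lemma lie_hom_on_id: "X \<subseteq> X' \<Longrightarrow> lie_hom_on X X' (lie_restrict X id)"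
  by (rule lie_hom_on_restrict) (auto intro: lie_elems_mono)

lemma lin_on_fmod_id: "X \<subseteq> X' \<Longrightarrow> Y \<subseteq> Y' \<Longrightarrow> lin_on_fmod X Y X' Y' (fmod_restrict X Y id)"
  by (rule lin_on_fmod_restrict) (auto intro: fmod_mono)

text \<open>Brackets vanish on words of length one, which is why the coefficient of a single
  letter is a Lie homomorphism to a one-dimensional (abelian) Lie algebra.\<close>
lemma lie_hom_on_coeff:
  assumes "x' \<in> X'"
  shows "lie_hom_on X X' (lie_restrict X (\<lambda>p. nc_scale (p [x]) (nc_gen x')) :: ('a,'k::field) ncpoly \<Rightarrow> _)"
proof (rule lie_hom_on_restrict)
  fix p q :: "('a,'k) ncpoly" assume "p \<in> lie_elems X" "q \<in> lie_elems X"
  then have "nc_bracket p q [x] = 0"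
    by (simp add: nc_bracket_def nc_mult_def lie_elems_const_coeff)
  then show "nc_scale (nc_bracket p q [x]) (nc_gen x') =
      nc_bracket (nc_scale (p [x]) (nc_gen x')) (nc_scale (q [x]) (nc_gen x'))"
    by (simp add: nc_bracket_scale_same)
next
  show "nc_scale (p [x]) (nc_gen x') \<in> lie_elems X'" for p :: "('a,'k) ncpoly"
    using assms by (intro lie_elems.intros)
qed (auto simp: nc_add_def nc_scale_def fun_eq_iff distrib_right)

lemma rep_hom_coeff:
  assumes "y' \<in> Y'"
  shows "rep_hom X Y X' Y' (\<lambda>_. nc_zero) (fmod_restrict X Y (\<lambda>m. fm_scale (m ([], y)) (fm_basis y')))"
  unfolding rep_hom_zero_lie
proof
  show "lin_on_fmod X Y X' Y' (fmod_restrict X Y (\<lambda>m. fm_scale (m ([], y)) (fm_basis y')))"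
    using assms by (intro lin_on_fmod_restrict)
      (simp_all add: fm_scale_fmod fm_basis_fmod, simp_all add: fm_add_def fm_scale_def fun_eq_iff distrib_right)
qed (simp add: fmod_restrict_def fm_act_lie_elems_Nil)

lemma rep_hom_const_part:
  "rep_hom X Y {} Y (\<lambda>_. nc_zero)
     (fmod_restrict X Y (\<lambda>m (w, z). if w = [] then m (w, z) else 0) :: ('a,'b,'k::field) fmodel \<Rightarrow> _)"
  (is "rep_hom _ _ _ _ _ ?P")
  unfolding rep_hom_zero_lie
proof
  show "lin_on_fmod X Y {} Y ?P"
  proof (rule lin_on_fmod_restrict)
    fix m :: "('a,'b,'k) fmodel" assume m: "m \<in> fmod X Y"
    show "(\<lambda>(w, z). if w = [] then m (w, z) else 0) \<in> fmod {} Y"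
    proof (rule fmodI)
      have "{wz. (case wz of (w, z) \<Rightarrow> if w = [] then m (w, z) else 0) \<noteq> 0} \<subseteq> {wz. m wz \<noteq> 0}"
        by (auto split: if_splits)
      then show "finite {wz. (case wz of (w, z) \<Rightarrow> if w = [] then m (w, z) else 0) \<noteq> 0}"
        using m by (simp add: fmod_def finite_subset)
    qed (use fmod_supportD[OF m] in \<open>auto split: if_splits\<close>)
  qed (auto simp: fm_add_def fm_scale_def fun_eq_iff)
qed (auto simp: fmod_restrict_def fm_act_lie_elems_Nil fm_zero_def fun_eq_iff)

lemma lie_hom_on_const_zero: "lie_hom_on X X' (\<lambda>_. nc_zero)"
  by (simp add: lie_hom_on_def lie_elems.zero)

lemma rep_hom_zero: "rep_hom X Y X' Y' (\<lambda>_. nc_zero) (\<lambda>_. fm_zero)"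
  by (simp add: rep_hom_zero_module lie_hom_on_const_zero)

lemma lie_restrict_empty: "lie_restrict {} id = (\<lambda>_. nc_zero)"
  by (auto simp: lie_restrict_def lie_elems_empty)

lemma fmod_restrict_empty: "fmod_restrict X {} id = (\<lambda>_. fm_zero)"
  by (auto simp: fmod_restrict_def fmod_empty)

section \<open>Retractions onto a line\<close>

text \<open>\<open>L({x})\<close> and \<open>A({}){y}\<close> are lines of \<open>k\<close>-valued functions; only pointwise scaling is
  used here.\<close>

lemma retraction_of_line_inverse:
  fixes g :: "'c \<Rightarrow> 'k::field" and s :: "('d \<Rightarrow> 'k) \<Rightarrow> 'c \<Rightarrow> 'k" and r :: "('c \<Rightarrow> 'k) \<Rightarrow> 'd \<Rightarrow> 'k"
  assumes s_line: "\<And>v. v \<in> W \<Longrightarrow> \<exists>c. s v = (\<lambda>w. c * g w)"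
    and s_scale: "\<And>c v. v \<in> W \<Longrightarrow> s (\<lambda>w. c * v w) = (\<lambda>w. c * s v w)"
    and r_scale: "\<And>c. r (\<lambda>w. c * g w) = (\<lambda>w. c * r g w)"
    and r_g: "r g \<in> W" and r_s: "\<And>v. v \<in> W \<Longrightarrow> r (s v) = v"
    and nonzero: "u \<in> W" "u \<noteq> (\<lambda>_. 0)"
  shows "s (r (\<lambda>w. c * g w)) = (\<lambda>w. c * g w)"
proof -
  obtain c0 where c0: "s (r g) = (\<lambda>w. c0 * g w)" using s_line[OF r_g] by blast
  have fixpoint: "r g = (\<lambda>w. c0 * r g w)" using r_s[OF r_g] c0 r_scale by metis
  obtain c1 where "s u = (\<lambda>w. c1 * g w)" using s_line[OF nonzero(1)] by blast
  then have "u = (\<lambda>w. c1 * r g w)" using r_s[OF nonzero(1)] r_scale by metis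
  then obtain w where w: "r g w \<noteq> 0" using nonzero(2) by fastforce
  from fun_cong[OF fixpoint, of w] w have "c0 = 1" by simp
  then show ?thesis using r_scale s_scale[OF r_g] c0 by simp
qed

lemma delta_functions_collinear:
  fixes n :: "'c \<Rightarrow> 'k::field"
  assumes "(\<lambda>w. if w = a then 1 else 0) = (\<lambda>w. c * n w)"
    and "(\<lambda>w. if w = b then 1 else 0) = (\<lambda>w. d * n w)"
  shows "a = b"
proof (rule ccontr)
  assume "a \<noteq> b"
  from fun_cong[OF assms(1), of a] have "n a \<noteq> 0" by auto
  moreover from fun_cong[OF assms(2), of a] \<open>a \<noteq> b\<close> have "d * n a = 0" by simp
  moreover from fun_cong[OF assms(2), of b] have "d \<noteq> 0" by auto
  ultimately show False by simp
qed

lemma lie_retraction_onto_singleton_inverse: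
  assumes hs: "lie_hom_on X' {x} \<phi>s" and hr: "lie_hom_on {x} X' \<phi>r"
    and inv: "\<phi>r \<circ> \<phi>s = lie_restrict X' id" and "X' \<noteq> {}"
  shows "\<phi>s \<circ> \<phi>r = lie_restrict {x} id"
proof
  fix p
  show "(\<phi>s \<circ> \<phi>r) p = lie_restrict {x} id p"
  proof (cases "p \<in> lie_elems {x}")
    case True
    then obtain c where p: "p = nc_scale c (nc_gen x)" by (auto simp: lie_elems_singleton)
    obtain x' where x': "x' \<in> X'" using assms(4) by blast
    have "\<phi>s (\<phi>r (\<lambda>w. c * nc_gen x w)) = (\<lambda>w. c * nc_gen x w)"
    proof (rule retraction_of_line_inverse[where W = "lie_elems X'" and g = "nc_gen x" and s = \<phi>s and r = \<phi>r and u = "nc_gen x'"])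
      show "\<exists>c. \<phi>s v = (\<lambda>w. c * nc_gen x w)" if "v \<in> lie_elems X'" for v
        using hs that by (auto simp: lie_hom_on_def lie_elems_singleton nc_scale_def)
      show "\<phi>s (\<lambda>w. c * v w) = (\<lambda>w. c * \<phi>s v w)" if "v \<in> lie_elems X'" for c v
        using hs that unfolding lie_hom_on_def nc_scale_def by blast
      show "\<phi>r (\<lambda>w. c * nc_gen x w) = (\<lambda>w. c * \<phi>r (nc_gen x) w)" for c
        using hr unfolding lie_hom_on_def nc_scale_def by (blast intro: lie_elems.gen)
      show "\<phi>r (nc_gen x) \<in> lie_elems X'"
        using hr unfolding lie_hom_on_def by (blast intro: lie_elems.gen)
      show "\<phi>r (\<phi>s v) = v" if "v \<in> lie_elems X'" for v
        using lie_restrict_inverseD[OF inv that] .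
      show "nc_gen x' \<in> lie_elems X'" using x' by (rule lie_elems.gen)
      show "nc_gen x' \<noteq> (\<lambda>_. 0)" using nc_gen_neq_zero[of x'] by (simp add: nc_zero_def)
    qed
    then show ?thesis using True p by (simp add: lie_restrict_def nc_scale_def)
  next
    case False
    then show ?thesis using hr lie_hom_on_zero[OF hs] by (simp add: lie_restrict_def lie_hom_on_def)
  qed
qed

lemma fmod_retraction_onto_singleton_inverse:
  assumes ls: "lin_on_fmod {} Y' {} {y} \<psi>s" and lr: "lin_on_fmod {} {y} {} Y' \<psi>r"
    and inv: "\<psi>r \<circ> \<psi>s = fmod_restrict {} Y' id" and "Y' \<noteq> {}"
  shows "\<psi>s \<circ> \<psi>r = fmod_restrict {} {y} id"
proof
  fix m
  show "(\<psi>s \<circ> \<psi>r) m = fmod_restrict {} {y} id m"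
  proof (cases "m \<in> fmod {} {y}")
    case True
    then obtain c where m: "m = fm_scale c (fm_basis y)" by (auto simp: fmod_empty_singleton)
    obtain y' where y': "y' \<in> Y'" using assms(4) by blast
    have "\<psi>s (\<psi>r (\<lambda>w. c * fm_basis y w)) = (\<lambda>w. c * fm_basis y w)"
    proof (rule retraction_of_line_inverse[where W = "fmod {} Y'" and g = "fm_basis y" and s = \<psi>s and r = \<psi>r and u = "fm_basis y'"])
      show "\<exists>c. \<psi>s v = (\<lambda>w. c * fm_basis y w)" if "v \<in> fmod {} Y'" for v
        using ls that by (auto simp: lin_on_fmod_def fmod_empty_singleton fm_scale_def)
      show "\<psi>s (\<lambda>w. c * v w) = (\<lambda>w. c * \<psi>s v w)" if "v \<in> fmod {} Y'" for c v
        using ls that unfolding lin_on_fmod_def fm_scale_def by blast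
      show "\<psi>r (\<lambda>w. c * fm_basis y w) = (\<lambda>w. c * \<psi>r (fm_basis y) w)" for c
        using lr fm_basis_fmod[of y "{y}" "{}"] unfolding lin_on_fmod_def fm_scale_def by blast
      show "\<psi>r (fm_basis y) \<in> fmod {} Y'"
        using lr fm_basis_fmod[of y "{y}" "{}"] unfolding lin_on_fmod_def by blast
      show "\<psi>r (\<psi>s v) = v" if "v \<in> fmod {} Y'" for v
        using fmod_restrict_inverseD[OF inv that] .
      show "fm_basis y' \<in> fmod {} Y'" using y' by (rule fm_basis_fmod)
      show "fm_basis y' \<noteq> (\<lambda>_. 0)" using fm_basis_neq_zero[of y'] by (simp add: fm_zero_def)
    qed
    then show ?thesis using True m by (simp add: fmod_restrict_def fm_scale_def)
  next
    case False
    then show ?thesis using lr lin_on_fmod_zero[OF ls] by (simp add: fmod_restrict_def lin_on_fmod_def)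
  qed
qed

lemma lie_retract_of_singleton_subsingleton:
  assumes hs: "lie_hom_on X' {x} \<phi>s" and hr: "lie_hom_on {x} X' \<phi>r"
    and inv: "\<phi>r \<circ> \<phi>s = lie_restrict X' id" and "x1 \<in> X'" "x2 \<in> X'"
  shows "x1 = x2"
proof -
  have "\<exists>c. nc_gen x' = (\<lambda>w. c * \<phi>r (nc_gen x) w)" if "x' \<in> X'" for x'
  proof -
    have g: "nc_gen x' \<in> lie_elems X'" using that by (rule lie_elems.gen)
    then obtain c where "\<phi>s (nc_gen x') = nc_scale c (nc_gen x)"
      using hs by (auto simp: lie_hom_on_def lie_elems_singleton)
    then have "nc_gen x' = \<phi>r (nc_scale c (nc_gen x))"
      using lie_restrict_inverseD[OF inv g] by simp
    also have "\<dots> = nc_scale c (\<phi>r (nc_gen x))"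
      using hr by (simp add: lie_hom_on_def lie_elems.gen)
    finally show ?thesis by (auto simp: nc_scale_def)
  qed
  then obtain c d where "nc_gen x1 = (\<lambda>w. c * \<phi>r (nc_gen x) w)" "nc_gen x2 = (\<lambda>w. d * \<phi>r (nc_gen x) w)"
    using assms(4,5) by blast
  then have "[x1] = [x2]" unfolding nc_gen_def by (rule delta_functions_collinear)
  then show ?thesis by simp
qed

text \<open>By the decomposition \<open>m = c y + x m'\<close>, a map killing the action sees only the constant
  coefficient.\<close>
lemma fmod_singleton_map_factors:
  assumes lin: "lin_on_fmod {x} {y} X' Y' \<psi>"
    and kills: "\<forall>l\<in>lie_elems {x}. \<forall>v\<in>fmod {x} {y}. \<psi> (fm_act l v) = fm_zero"
    and m: "m \<in> fmod {x} {y}"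
  shows "\<psi> m = fm_scale (m ([], y)) (\<psi> (fm_basis y))"
proof -
  define m' where "m' = (\<lambda>(w, z). m (x # w, z))"
  note decomp = fmod_singleton_decomp[OF m, folded m'_def]
  have basis: "fm_basis y \<in> fmod {x} {y}" by (simp add: fm_basis_fmod)
  have "\<psi> m = fm_add (\<psi> (fm_scale (m ([], y)) (fm_basis y))) (\<psi> (fm_act (nc_gen x) m'))"
    using lin fm_scale_fmod[OF basis] decomp(2) unfolding lin_on_fmod_def by (metis decomp(3))
  also have "\<psi> (fm_act (nc_gen x) m') = fm_zero"
    using kills decomp(1) by (simp add: lie_elems.gen)
  also have "\<psi> (fm_scale (m ([], y)) (fm_basis y)) = fm_scale (m ([], y)) (\<psi> (fm_basis y))"
    using lin basis unfolding lin_on_fmod_def by blast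
  finally show ?thesis by (simp add: fm_add_def fm_zero_def)
qed

lemma fmod_retract_of_cyclic_subsingleton:
  assumes rs: "rep_hom {} Y' {x} {y} \<phi>s \<psi>s" and rr: "rep_hom {x} {y} {} Y' \<phi>r \<psi>r"
    and inv: "\<psi>r \<circ> \<psi>s = fmod_restrict {} Y' id" and "y1 \<in> Y'" "y2 \<in> Y'"
  shows "y1 = y2"
proof -
  have "\<phi>r = (\<lambda>_. nc_zero)" using rr lie_hom_on_trivial unfolding rep_hom_def by blast
  then have lr: "lin_on_fmod {x} {y} {} Y' \<psi>r"
    and kills: "\<forall>l\<in>lie_elems {x}. \<forall>v\<in>fmod {x} {y}. \<psi>r (fm_act l v) = fm_zero"
    using rr by (simp_all add: rep_hom_zero_lie)
  have "\<exists>c. fm_basis y' = (\<lambda>w. c * \<psi>r (fm_basis y) w)" if "y' \<in> Y'" for y'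
  proof -
    have b: "fm_basis y' \<in> fmod {} Y'" using that by (rule fm_basis_fmod)
    then have "\<psi>s (fm_basis y') \<in> fmod {x} {y}" using rs unfolding rep_hom_def lin_on_fmod_def by blast
    moreover have "fm_basis y' = \<psi>r (\<psi>s (fm_basis y'))"
      using fmod_restrict_inverseD[OF inv b] by simp
    ultimately show ?thesis
      using fmod_singleton_map_factors[OF lr kills] by (auto simp: fm_scale_def)
  qed
  then obtain c d where "fm_basis y1 = (\<lambda>w. c * \<psi>r (fm_basis y) w)"
    "fm_basis y2 = (\<lambda>w. d * \<psi>r (fm_basis y) w)"
    using assms(4,5) by blast
  then show ?thesis
    using delta_functions_collinear[of "([], y1)" c "\<psi>r (fm_basis y)" "([], y2)" d]
    by (simp add: fm_basis_def)
qed

section \<open>Categorical properties of objects of \<open>\<Xi>\<^sup>0\<close>\<close>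

definition xi_unique_hom :: "'k::field itself \<Rightarrow> 'a set \<Rightarrow> 'b set \<Rightarrow> ('a,'b) xobj \<Rightarrow> ('a,'b) xobj \<Rightarrow> bool" where
  "xi_unique_hom K X0 Y0 A B \<longleftrightarrow>
     (\<forall>f\<in>(xi_hom X0 Y0 A B :: ('a,'b,'k) xmor set). \<forall>g\<in>xi_hom X0 Y0 A B. f = g)"

definition xi_zero :: "'k::field itself \<Rightarrow> 'a set \<Rightarrow> 'b set \<Rightarrow> ('a,'b) xobj \<Rightarrow> bool" where
  "xi_zero K X0 Y0 A \<longleftrightarrow> xi_unique_hom K X0 Y0 A A"

definition xi_retract :: "'k::field itself \<Rightarrow> 'a set \<Rightarrow> 'b set \<Rightarrow> ('a,'b) xobj \<Rightarrow> ('a,'b) xobj \<Rightarrow> bool" where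
  "xi_retract K X0 Y0 Z A \<longleftrightarrow>
     (\<exists>s\<in>(xi_hom X0 Y0 Z A :: ('a,'b,'k) xmor set). \<exists>r\<in>xi_hom X0 Y0 A Z. xi_comp r s = xi_id Z)"

text \<open>\<open>xi_full\<close> singles out the objects \<open>W(X,Y)\<close> with \<open>X\<close> and \<open>Y\<close> both nonempty.\<close>
definition xi_full :: "'k::field itself \<Rightarrow> 'a set \<Rightarrow> 'b set \<Rightarrow> ('a,'b) xobj \<Rightarrow> bool" where
  "xi_full K X0 Y0 A \<longleftrightarrow>
     \<not> xi_zero K X0 Y0 A \<and> (\<forall>B\<in>xi_obj X0 Y0. xi_unique_hom K X0 Y0 A B \<longrightarrow> xi_zero K X0 Y0 B)"

definition xi_simple :: "'k::field itself \<Rightarrow> 'a set \<Rightarrow> 'b set \<Rightarrow> ('a,'b) xobj \<Rightarrow> bool" where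
  "xi_simple K X0 Y0 Z \<longleftrightarrow>
     (\<forall>W\<in>xi_obj X0 Y0. \<forall>s\<in>(xi_hom X0 Y0 W Z :: ('a,'b,'k) xmor set). \<forall>r\<in>xi_hom X0 Y0 Z W.
        xi_comp r s = xi_id W \<longrightarrow> xi_zero K X0 Y0 W \<or> xi_comp s r = xi_id Z)"

definition xi_cyclic_type :: "'k::field itself \<Rightarrow> 'a set \<Rightarrow> 'b set \<Rightarrow> ('a,'b) xobj \<Rightarrow> bool" where
  "xi_cyclic_type K X0 Y0 A \<longleftrightarrow> xi_full K X0 Y0 A \<and>
     (\<forall>Z\<in>xi_obj X0 Y0. xi_retract K X0 Y0 Z A \<and> \<not> xi_zero K X0 Y0 Z \<and> \<not> xi_full K X0 Y0 Z
        \<longrightarrow> xi_simple K X0 Y0 Z)"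

lemma xi_hom_iff:
  "f \<in> xi_hom X0 Y0 (X, Y) (X', Y') \<longleftrightarrow> (X, Y) \<in> xi_obj X0 Y0 \<and> (X', Y') \<in> xi_obj X0 Y0 \<and>
     (\<exists>\<phi> \<psi>. f = ((X, Y), (X', Y'), \<phi>, \<psi>) \<and> rep_hom X Y X' Y' \<phi> \<psi>)"
  by (auto simp: xi_hom_def)

lemma xi_obj_subset: "(X, Y) \<in> xi_obj X0 Y0 \<Longrightarrow> X' \<subseteq> X \<Longrightarrow> Y' \<subseteq> Y \<Longrightarrow> (X', Y') \<in> xi_obj X0 Y0"
  by (auto simp: xi_obj_def intro: finite_subset)

lemma xi_unique_hom_iff:
  fixes K :: "'k::field itself"
  assumes A: "(X, Y) \<in> xi_obj X0 Y0" and B: "(X', Y') \<in> xi_obj X0 Y0"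
  shows "xi_unique_hom K X0 Y0 (X, Y) (X', Y') \<longleftrightarrow> (X = {} \<or> X' = {}) \<and> (Y = {} \<or> Y' = {})"
proof
  let ?zero = "((X, Y), (X', Y'), \<lambda>_. nc_zero, \<lambda>_. fm_zero) :: ('a,'b,'k) xmor"
  have zero: "?zero \<in> xi_hom X0 Y0 (X, Y) (X', Y')"
    using A B by (simp add: xi_hom_iff rep_hom_zero)
  assume unique: "xi_unique_hom K X0 Y0 (X, Y) (X', Y')"
  show "(X = {} \<or> X' = {}) \<and> (Y = {} \<or> Y' = {})"
  proof (intro conjI; rule ccontr)
    assume "\<not> (X = {} \<or> X' = {})"
    then obtain x x' where x: "x \<in> X" and x': "x' \<in> X'" by blast
    define \<phi> :: "('a,'k) ncpoly \<Rightarrow> ('a,'k) ncpoly"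
      where "\<phi> = lie_restrict X (\<lambda>p. nc_scale (p [x]) (nc_gen x'))"
    have "((X, Y), (X', Y'), \<phi>, \<lambda>_. fm_zero) \<in> xi_hom X0 Y0 (X, Y) (X', Y')"
      using A B lie_hom_on_coeff[OF x'] by (simp add: xi_hom_iff rep_hom_zero_module \<phi>_def)
    with zero unique have "\<phi> = (\<lambda>_. nc_zero)" unfolding xi_unique_hom_def by fastforce
    moreover have "\<phi> (nc_gen x) = nc_gen x'"
      using lie_elems.gen[OF x, where 'k = 'k] by (simp add: \<phi>_def lie_restrict_def nc_gen_self)
    ultimately show False using nc_gen_neq_zero by metis
  next
    assume "\<not> (Y = {} \<or> Y' = {})"
    then obtain y y' where y: "y \<in> Y" and y': "y' \<in> Y'" by blast
    define \<psi> :: "('a,'b,'k) fmodel \<Rightarrow> ('a,'b,'k) fmodel"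
      where "\<psi> = fmod_restrict X Y (\<lambda>m. fm_scale (m ([], y)) (fm_basis y'))"
    have "((X, Y), (X', Y'), \<lambda>_. nc_zero, \<psi>) \<in> xi_hom X0 Y0 (X, Y) (X', Y')"
      using A B rep_hom_coeff[OF y'] by (simp add: xi_hom_iff \<psi>_def)
    with zero unique have "\<psi> = (\<lambda>_. fm_zero)" unfolding xi_unique_hom_def by fastforce
    moreover have "\<psi> (fm_basis y) = fm_basis y'"
      using fm_basis_fmod[OF y, where 'a = 'a and 'k = 'k] by (simp add: \<psi>_def fmod_restrict_def fm_basis_self)
    ultimately show False using fm_basis_neq_zero by metis
  qed
next
  assume trivial: "(X = {} \<or> X' = {}) \<and> (Y = {} \<or> Y' = {})"
  have "f = ((X, Y), (X', Y'), \<lambda>_. nc_zero, \<lambda>_. fm_zero)"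
    if "f \<in> (xi_hom X0 Y0 (X, Y) (X', Y') :: ('a,'b,'k) xmor set)" for f
  proof -
    from that obtain \<phi> \<psi> where f: "f = ((X, Y), (X', Y'), \<phi>, \<psi>)" and r: "rep_hom X Y X' Y' \<phi> \<psi>"
      by (auto simp: xi_hom_iff)
    have "\<phi> = (\<lambda>_. nc_zero)" using r trivial lie_hom_on_trivial unfolding rep_hom_def by blast
    moreover have "\<psi> = (\<lambda>_. fm_zero)" using r trivial lin_on_fmod_trivial unfolding rep_hom_def by blast
    ultimately show ?thesis using f by simp
  qed
  then show "xi_unique_hom K X0 Y0 (X, Y) (X', Y')" unfolding xi_unique_hom_def by blast
qed

lemma xi_zero_iff: "(X, Y) \<in> xi_obj X0 Y0 \<Longrightarrow> xi_zero K X0 Y0 (X, Y) \<longleftrightarrow> X = {} \<and> Y = {}"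
  unfolding xi_zero_def by (simp add: xi_unique_hom_iff)

lemma xi_full_iff:
  fixes K :: "'k::field itself"
  assumes A: "(X, Y) \<in> xi_obj X0 Y0" and "x0 \<in> X0" "y0 \<in> Y0"
  shows "xi_full K X0 Y0 (X, Y) \<longleftrightarrow> X \<noteq> {} \<and> Y \<noteq> {}"
proof -
  have L: "({x0}, {}) \<in> xi_obj X0 Y0" and M: "({}, {y0}) \<in> xi_obj X0 Y0"
    using assms by (auto simp: xi_obj_def)
  have "(\<forall>B\<in>xi_obj X0 Y0. xi_unique_hom K X0 Y0 (X, Y) B \<longrightarrow> xi_zero K X0 Y0 B) \<longleftrightarrow> X \<noteq> {} \<and> Y \<noteq> {}"
  proof
    assume all: "\<forall>B\<in>xi_obj X0 Y0. xi_unique_hom K X0 Y0 (X, Y) B \<longrightarrow> xi_zero K X0 Y0 B"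
    show "X \<noteq> {} \<and> Y \<noteq> {}"
    proof (intro conjI notI)
      assume "X = {}"
      then have "xi_unique_hom K X0 Y0 (X, Y) ({x0}, {})" using xi_unique_hom_iff[OF A L] by simp
      with all L have "xi_zero K X0 Y0 ({x0}, {})" by blast
      then show False by (simp add: xi_zero_iff[OF L])
    next
      assume "Y = {}"
      then have "xi_unique_hom K X0 Y0 (X, Y) ({}, {y0})" using xi_unique_hom_iff[OF A M] by simp
      with all M have "xi_zero K X0 Y0 ({}, {y0})" by blast
      then show False by (simp add: xi_zero_iff[OF M])
    qed
  next
    assume "X \<noteq> {} \<and> Y \<noteq> {}"
    then show "\<forall>B\<in>xi_obj X0 Y0. xi_unique_hom K X0 Y0 (X, Y) B \<longrightarrow> xi_zero K X0 Y0 B"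
      by (auto simp: xi_unique_hom_iff[OF A] xi_zero_iff)
  qed
  then show ?thesis unfolding xi_full_def by (auto simp: xi_zero_iff[OF A])
qed

lemma xi_retractI:
  fixes K :: "'k::field itself"
  assumes "(X', Y') \<in> xi_obj X0 Y0" "(X, Y) \<in> xi_obj X0 Y0"
    and "rep_hom X' Y' X Y \<phi>s (\<psi>s :: ('a,'b,'k) fmodel \<Rightarrow> _)" "rep_hom X Y X' Y' \<phi>r \<psi>r"
    and "\<phi>r \<circ> \<phi>s = lie_restrict X' id" "\<psi>r \<circ> \<psi>s = fmod_restrict X' Y' id"
  shows "xi_retract K X0 Y0 (X', Y') (X, Y)"
  unfolding xi_retract_def using assms
  by (intro bexI[of _ "((X', Y'), (X, Y), \<phi>s, \<psi>s)"] bexI[of _ "((X, Y), (X', Y'), \<phi>r, \<psi>r)"])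
    (simp_all add: xi_hom_iff)

lemma xi_retractE:
  fixes K :: "'k::field itself"
  assumes "xi_retract K X0 Y0 (X', Y') (X, Y)"
  obtains \<phi>s \<psi>s \<phi>r \<psi>r where "rep_hom X' Y' X Y \<phi>s (\<psi>s :: ('a,'b,'k) fmodel \<Rightarrow> _)"
    "rep_hom X Y X' Y' \<phi>r \<psi>r" "\<phi>r \<circ> \<phi>s = lie_restrict X' id" "\<psi>r \<circ> \<psi>s = fmod_restrict X' Y' id"
proof -
  from assms obtain s r where s: "s \<in> (xi_hom X0 Y0 (X', Y') (X, Y) :: ('a,'b,'k) xmor set)"
    and r: "r \<in> xi_hom X0 Y0 (X, Y) (X', Y')" and rs: "xi_comp r s = xi_id (X', Y')"
    unfolding xi_retract_def by blast
  from s r obtain \<phi>s \<psi>s \<phi>r \<psi>r where "s = ((X', Y'), (X, Y), \<phi>s, \<psi>s)" "r = ((X, Y), (X', Y'), \<phi>r, \<psi>r)"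
    and "rep_hom X' Y' X Y \<phi>s \<psi>s" "rep_hom X Y X' Y' \<phi>r \<psi>r"
    by (auto simp: xi_hom_iff)
  with rs that show ?thesis by simp
qed

lemma xi_simpleI:
  fixes K :: "'k::field itself"
  assumes "\<And>X' Y' \<phi>s \<psi>s \<phi>r \<psi>r. (X', Y') \<in> xi_obj X0 Y0 \<Longrightarrow> X' \<noteq> {} \<or> Y' \<noteq> {} \<Longrightarrow>
      rep_hom X' Y' X Y \<phi>s (\<psi>s :: ('a,'b,'k) fmodel \<Rightarrow> _) \<Longrightarrow> rep_hom X Y X' Y' \<phi>r \<psi>r \<Longrightarrow>
      \<phi>r \<circ> \<phi>s = lie_restrict X' id \<Longrightarrow> \<psi>r \<circ> \<psi>s = fmod_restrict X' Y' id \<Longrightarrow>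
      \<phi>s \<circ> \<phi>r = lie_restrict X id \<and> \<psi>s \<circ> \<psi>r = fmod_restrict X Y id"
  shows "xi_simple K X0 Y0 (X, Y)"
  unfolding xi_simple_def
proof (intro ballI impI)
  fix W s r
  assume W: "W \<in> xi_obj X0 Y0" and s: "s \<in> (xi_hom X0 Y0 W (X, Y) :: ('a,'b,'k) xmor set)"
    and r: "r \<in> xi_hom X0 Y0 (X, Y) W" and rs: "xi_comp r s = xi_id W"
  obtain X' Y' where W_eq: "W = (X', Y')" by (cases W)
  from s r obtain \<phi>s \<psi>s \<phi>r \<psi>r where sr: "s = ((X', Y'), (X, Y), \<phi>s, \<psi>s)" "r = ((X, Y), (X', Y'), \<phi>r, \<psi>r)"
    and "rep_hom X' Y' X Y \<phi>s \<psi>s" "rep_hom X Y X' Y' \<phi>r \<psi>r"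
    by (auto simp: xi_hom_iff W_eq)
  moreover have inv: "\<phi>r \<circ> \<phi>s = lie_restrict X' id" "\<psi>r \<circ> \<psi>s = fmod_restrict X' Y' id"
    using rs by (simp_all add: sr W_eq)
  ultimately show "xi_zero K X0 Y0 W \<or> xi_comp s r = xi_id (X, Y)"
  proof (cases "X' = {} \<and> Y' = {}")
    case False
    with W assms show ?thesis
      using \<open>rep_hom X' Y' X Y \<phi>s \<psi>s\<close> \<open>rep_hom X Y X' Y' \<phi>r \<psi>r\<close> inv W_eq sr by auto
  next
    case True
    then have "xi_zero K X0 Y0 W" using W xi_zero_iff[of X' Y' X0 Y0 K] by (simp add: W_eq)
    then show ?thesis ..
  qed
qed

lemma xi_simpleD:
  fixes K :: "'k::field itself"
  assumes "xi_simple K X0 Y0 (X, Y)" and "(X, Y) \<in> xi_obj X0 Y0"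
    and W: "(X', Y') \<in> xi_obj X0 Y0" "X' \<noteq> {} \<or> Y' \<noteq> {}"
    and "rep_hom X' Y' X Y \<phi>s (\<psi>s :: ('a,'b,'k) fmodel \<Rightarrow> _)" "rep_hom X Y X' Y' \<phi>r \<psi>r"
    and "\<phi>r \<circ> \<phi>s = lie_restrict X' id" "\<psi>r \<circ> \<psi>s = fmod_restrict X' Y' id"
  shows "\<phi>s \<circ> \<phi>r = lie_restrict X id \<and> \<psi>s \<circ> \<psi>r = fmod_restrict X Y id"
proof -
  have "((X', Y'), (X, Y), \<phi>s, \<psi>s) \<in> xi_hom X0 Y0 (X', Y') (X, Y)"
    "((X, Y), (X', Y'), \<phi>r, \<psi>r) \<in> xi_hom X0 Y0 (X, Y) (X', Y')"
    "xi_comp ((X, Y), (X', Y'), \<phi>r, \<psi>r) ((X', Y'), (X, Y), \<phi>s, \<psi>s) = xi_id (X', Y')"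
    using assms by (simp_all add: xi_hom_iff)
  with assms(1) W(1) have "xi_zero K X0 Y0 (X', Y') \<or>
      xi_comp ((X', Y'), (X, Y), \<phi>s, \<psi>s) ((X, Y), (X', Y'), \<phi>r, \<psi>r) = xi_id (X, Y)"
    unfolding xi_simple_def by blast
  then show ?thesis using W(2) xi_zero_iff[OF W(1), of K] by auto
qed

lemma lie_restrict_id_idem: "lie_restrict X id \<circ> lie_restrict X id = lie_restrict X id"
  by (auto simp: lie_restrict_def lie_elems.zero)

lemma rep_hom_module_incl:
  "Y' \<subseteq> Y \<Longrightarrow> rep_hom {} Y' X Y (\<lambda>_. nc_zero) (fmod_restrict {} Y' id)"
  unfolding rep_hom_zero_lie using lin_on_fmod_id[of "{}" X Y' Y]
  by (simp add: lie_elems_empty fmod_restrict_def)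

lemma xi_retract_lie_part:
  fixes K :: "'k::field itself"
  assumes "(X, Y) \<in> xi_obj X0 Y0"
  shows "xi_retract K X0 Y0 (X, {}) (X, Y)"
proof -
  have "rep_hom X Y' X Y'' (lie_restrict X id) (\<lambda>_. fm_zero :: ('a,'b,'k) fmodel)" for Y' Y''
    by (simp add: rep_hom_zero_module lie_hom_on_id)
  moreover have "(X, {}) \<in> xi_obj X0 Y0" using xi_obj_subset[OF assms] by blast
  ultimately show ?thesis
    using assms lie_restrict_id_idem by (intro xi_retractI) (auto simp: fmod_restrict_empty)
qed

lemma xi_retract_module_part:
  fixes K :: "'k::field itself"
  assumes "(X, Y) \<in> xi_obj X0 Y0"
  shows "xi_retract K X0 Y0 ({}, Y) (X, Y)"
proof -
  define \<psi>r :: "('a,'b,'k) fmodel \<Rightarrow> _"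
    where "\<psi>r = fmod_restrict X Y (\<lambda>m (w, z). if w = [] then m (w, z) else 0)"
  have "\<psi>r \<circ> fmod_restrict {} Y id = fmod_restrict {} Y id"
  proof
    fix m :: "('a,'b,'k) fmodel"
    show "(\<psi>r \<circ> fmod_restrict {} Y id) m = fmod_restrict {} Y id m"
    proof (cases "m \<in> fmod {} Y")
      case True
      have "m \<in> fmod X Y" using fmod_mono[OF True] by blast
      with True have "\<psi>r m = m"
        by (auto simp: \<psi>r_def fmod_restrict_def fun_eq_iff dest: fmod_supportD)
      with True show ?thesis by (simp add: fmod_restrict_def)
    qed (auto simp: \<psi>r_def fmod_restrict_def fm_zero_def fun_eq_iff)
  qed
  moreover have "rep_hom X Y {} Y (\<lambda>_. nc_zero) \<psi>r"
    unfolding \<psi>r_def by (rule rep_hom_const_part)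
  moreover have "({}, Y) \<in> xi_obj X0 Y0" using xi_obj_subset[OF assms] by blast
  ultimately show ?thesis
    using assms rep_hom_module_incl[of Y Y X] by (intro xi_retractI) (auto simp: lie_restrict_empty)
qed

lemma not_xi_simple_lie_part:
  fixes K :: "'k::field itself"
  assumes Z: "(X, {}) \<in> xi_obj X0 Y0" and "x1 \<in> X" "x2 \<in> X" "x1 \<noteq> x2"
  shows "\<not> xi_simple K X0 Y0 (X, {})"
proof
  assume simple: "xi_simple K X0 Y0 (X, {})"
  define \<phi>s :: "('a,'k) ncpoly \<Rightarrow> _" where "\<phi>s = lie_restrict {x1} id"
  define \<phi>r :: "('a,'k) ncpoly \<Rightarrow> _" where "\<phi>r = lie_restrict X (\<lambda>p. nc_scale (p [x1]) (nc_gen x1))"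
  have W: "({x1}, {}) \<in> xi_obj X0 Y0" by (rule xi_obj_subset[OF Z]) (use assms(2) in auto)
  have homs: "rep_hom {x1} {} X {} \<phi>s (\<lambda>_. fm_zero :: ('a,'b,'k) fmodel)"
    "rep_hom X {} {x1} {} \<phi>r (\<lambda>_. fm_zero :: ('a,'b,'k) fmodel)"
    using assms(2) lie_hom_on_id[of "{x1}" X] lie_hom_on_coeff[of x1 "{x1}" X x1]
    by (simp_all add: rep_hom_zero_module \<phi>s_def \<phi>r_def)
  have "\<phi>r \<circ> \<phi>s = lie_restrict {x1} id"
  proof
    fix p :: "('a,'k) ncpoly"
    show "(\<phi>r \<circ> \<phi>s) p = lie_restrict {x1} id p"
    proof (cases "p \<in> lie_elems {x1}")
      case True
      then obtain c where "p = nc_scale c (nc_gen x1)" by (auto simp: lie_elems_singleton)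
      moreover have "p \<in> lie_elems X" using True assms(2) lie_elems_mono by blast
      ultimately show ?thesis
        using True by (simp add: \<phi>r_def \<phi>s_def lie_restrict_def nc_scale_def nc_gen_self)
    qed (simp add: \<phi>r_def \<phi>s_def lie_restrict_def lie_elems.zero nc_zero_apply)
  qed
  then have inv: "\<phi>s \<circ> \<phi>r = lie_restrict X id"
    using xi_simpleD[OF simple Z W _ homs] by (simp add: fmod_restrict_empty o_def)
  have g2: "(nc_gen x2 :: ('a,'k) ncpoly) \<in> lie_elems X" using assms(3) by (rule lie_elems.gen)
  moreover have "nc_gen x2 [x1] = (0::'k)" using assms(4) by (simp add: nc_gen_def)
  ultimately have "\<phi>r (nc_gen x2) = nc_zero" by (simp add: \<phi>r_def lie_restrict_def)
  then have kill: "(\<phi>s \<circ> \<phi>r) (nc_gen x2) = nc_zero" by (simp add: \<phi>s_def lie_restrict_def)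
  have "lie_restrict X id (nc_gen x2) = (nc_gen x2 :: ('a,'k) ncpoly)" using g2 by (simp add: lie_restrict_def)
  then have "nc_gen x2 = (nc_zero :: ('a,'k) ncpoly)" by (simp only: kill flip: inv)
  then show False by (metis nc_gen_neq_zero)
qed

lemma not_xi_simple_module_part:
  fixes K :: "'k::field itself"
  assumes Z: "({}, Y) \<in> xi_obj X0 Y0" and "y1 \<in> Y" "y2 \<in> Y" "y1 \<noteq> y2"
  shows "\<not> xi_simple K X0 Y0 ({}, Y)"
proof
  assume simple: "xi_simple K X0 Y0 ({}, Y)"
  define \<psi>s :: "('a,'b,'k) fmodel \<Rightarrow> _" where "\<psi>s = fmod_restrict {} {y1} id"
  define \<psi>r :: "('a,'b,'k) fmodel \<Rightarrow> _"
    where "\<psi>r = fmod_restrict {} Y (\<lambda>m. fm_scale (m ([], y1)) (fm_basis y1))"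
  have W: "({}, {y1}) \<in> xi_obj X0 Y0" by (rule xi_obj_subset[OF Z]) (use assms(2) in auto)
  have homs: "rep_hom {} {y1} {} Y (\<lambda>_. nc_zero) \<psi>s" "rep_hom {} Y {} {y1} (\<lambda>_. nc_zero) \<psi>r"
    using assms(2) rep_hom_module_incl[of "{y1}" Y "{}"] rep_hom_coeff[of y1 "{y1}" "{}" Y "{}" y1]
    by (simp_all add: \<psi>s_def \<psi>r_def)
  have "\<psi>r \<circ> \<psi>s = fmod_restrict {} {y1} id"
  proof
    fix m :: "('a,'b,'k) fmodel"
    show "(\<psi>r \<circ> \<psi>s) m = fmod_restrict {} {y1} id m"
    proof (cases "m \<in> fmod {} {y1}")
      case True
      then obtain c where "m = fm_scale c (fm_basis y1)" by (auto simp: fmod_empty_singleton)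
      moreover have "m \<in> fmod {} Y" using True assms(2) fmod_mono by blast
      ultimately show ?thesis
        using True by (simp add: \<psi>r_def \<psi>s_def fmod_restrict_def fm_scale_def fm_basis_self)
    qed (simp add: \<psi>r_def \<psi>s_def fmod_restrict_def fm_zero_apply)
  qed
  then have inv: "\<psi>s \<circ> \<psi>r = fmod_restrict {} Y id"
    using xi_simpleD[OF simple Z W _ homs] by (simp add: lie_restrict_empty o_def)
  have b2: "(fm_basis y2 :: ('a,'b,'k) fmodel) \<in> fmod {} Y" using assms(3) by (rule fm_basis_fmod)
  moreover have "fm_basis y2 ([] :: 'a list, y1) = (0::'k)" using assms(4) by (simp add: fm_basis_def)
  ultimately have "\<psi>r (fm_basis y2) = fm_zero" by (simp add: \<psi>r_def fmod_restrict_def)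
  then have kill: "(\<psi>s \<circ> \<psi>r) (fm_basis y2) = fm_zero" by (simp add: \<psi>s_def fmod_restrict_def)
  have "fmod_restrict {} Y id (fm_basis y2) = (fm_basis y2 :: ('a,'b,'k) fmodel)" using b2 by (simp add: fmod_restrict_def)
  then have "fm_basis y2 = (fm_zero :: ('a,'b,'k) fmodel)" by (simp only: kill flip: inv)
  then show False by (metis fm_basis_neq_zero)
qed

lemma xi_simple_lie_singleton:
  fixes K :: "'k::field itself"
  shows "xi_simple K X0 Y0 ({x}, {})"
proof (rule xi_simpleI)
  fix X' Y' \<phi>s \<phi>r and \<psi>s \<psi>r :: "('a,'b,'k) fmodel \<Rightarrow> _"
  assume nonzero: "X' \<noteq> {} \<or> Y' \<noteq> {}"
    and rs: "rep_hom X' Y' {x} {} \<phi>s \<psi>s" and rr: "rep_hom {x} {} X' Y' \<phi>r \<psi>r"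
    and inv: "\<phi>r \<circ> \<phi>s = lie_restrict X' id" "\<psi>r \<circ> \<psi>s = fmod_restrict X' Y' id"
  have zero: "\<psi>s = (\<lambda>_. fm_zero)" "\<psi>r = (\<lambda>_. fm_zero)"
    using rs rr lin_on_fmod_trivial unfolding rep_hom_def by blast+
  then have module: "\<psi>s \<circ> \<psi>r = fmod_restrict {x} {} id" by (simp add: fmod_restrict_empty o_def)
  have "fmod_restrict X' Y' id = (\<lambda>_. fm_zero :: ('a,'b,'k) fmodel)" unfolding inv(2)[symmetric] zero by (simp add: o_def)
  have "Y' = {}"
  proof (rule ccontr)
    assume "Y' \<noteq> {}"
    then obtain y' where "y' \<in> Y'" by blast
    then have "fmod_restrict X' Y' id (fm_basis y') = (fm_basis y' :: ('a,'b,'k) fmodel)"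
      by (simp add: fmod_restrict_def fm_basis_fmod)
    with \<open>fmod_restrict X' Y' id = (\<lambda>_. fm_zero)\<close> show False by (metis fm_basis_neq_zero)
  qed
  with nonzero rs rr inv(1) have "\<phi>s \<circ> \<phi>r = lie_restrict {x} id"
    by (intro lie_retraction_onto_singleton_inverse) (auto simp: rep_hom_def)
  then show "\<phi>s \<circ> \<phi>r = lie_restrict {x} id \<and> \<psi>s \<circ> \<psi>r = fmod_restrict {x} {} id"
    using module ..
qed

lemma xi_simple_module_singleton:
  fixes K :: "'k::field itself"
  shows "xi_simple K X0 Y0 ({}, {y})"
proof (rule xi_simpleI)
  fix X' Y' \<phi>s \<phi>r and \<psi>s \<psi>r :: "('a,'b,'k) fmodel \<Rightarrow> _"
  assume nonzero: "X' \<noteq> {} \<or> Y' \<noteq> {}"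
    and rs: "rep_hom X' Y' {} {y} \<phi>s \<psi>s" and rr: "rep_hom {} {y} X' Y' \<phi>r \<psi>r"
    and inv: "\<phi>r \<circ> \<phi>s = lie_restrict X' id" "\<psi>r \<circ> \<psi>s = fmod_restrict X' Y' id"
  have zero: "\<phi>s = (\<lambda>_. nc_zero)" "\<phi>r = (\<lambda>_. nc_zero)"
    using rs rr lie_hom_on_trivial unfolding rep_hom_def by blast+
  then have lie: "\<phi>s \<circ> \<phi>r = lie_restrict {} id" by (simp add: lie_restrict_empty o_def)
  have "lie_restrict X' id = (\<lambda>_. nc_zero :: ('a,'k) ncpoly)" unfolding inv(1)[symmetric] zero by (simp add: o_def)
  have "X' = {}"
  proof (rule ccontr)
    assume "X' \<noteq> {}"
    then obtain x' where "x' \<in> X'" by blast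
    then have "lie_restrict X' id (nc_gen x') = (nc_gen x' :: ('a,'k) ncpoly)"
      by (simp add: lie_restrict_def lie_elems.gen)
    with \<open>lie_restrict X' id = (\<lambda>_. nc_zero)\<close> show False by (metis nc_gen_neq_zero)
  qed
  with nonzero rs rr inv(2) have "\<psi>s \<circ> \<psi>r = fmod_restrict {} {y} id"
    by (intro fmod_retraction_onto_singleton_inverse) (auto simp: rep_hom_def)
  with lie show "\<phi>s \<circ> \<phi>r = lie_restrict {} id \<and> \<psi>s \<circ> \<psi>r = fmod_restrict {} {y} id" ..
qed

lemma xi_cyclic_type_cyclic:
  fixes K :: "'k::field itself"
  assumes A: "({x}, {y}) \<in> xi_obj X0 Y0"
  shows "xi_cyclic_type K X0 Y0 ({x}, {y})"
  unfolding xi_cyclic_type_def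
proof (intro conjI ballI impI)
  have x: "x \<in> X0" and y: "y \<in> Y0" using A by (auto simp: xi_obj_def)
  then show "xi_full K X0 Y0 ({x}, {y})" by (simp add: xi_full_iff[OF A])
  fix Z assume Z: "Z \<in> xi_obj X0 Y0"
    and "xi_retract K X0 Y0 Z ({x}, {y}) \<and> \<not> xi_zero K X0 Y0 Z \<and> \<not> xi_full K X0 Y0 Z"
  moreover obtain X' Y' where Z_eq: "Z = (X', Y')" by (cases Z)
  ultimately have retract: "xi_retract K X0 Y0 (X', Y') ({x}, {y})"
    and part: "X' = {} \<and> Y' \<noteq> {} \<or> X' \<noteq> {} \<and> Y' = {}"
    using xi_zero_iff[of X' Y' X0 Y0 K] xi_full_iff[of X' Y' X0 Y0 x y K] x y by auto
  from retract obtain \<phi>s \<psi>s \<phi>r \<psi>r where rs: "rep_hom X' Y' {x} {y} \<phi>s (\<psi>s :: ('a,'b,'k) fmodel \<Rightarrow> _)"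
    and rr: "rep_hom {x} {y} X' Y' \<phi>r \<psi>r"
    and inv: "\<phi>r \<circ> \<phi>s = lie_restrict X' id" "\<psi>r \<circ> \<psi>s = fmod_restrict X' Y' id"
    by (rule xi_retractE)
  from part show "xi_simple K X0 Y0 Z"
  proof
    assume part: "X' = {} \<and> Y' \<noteq> {}"
    then obtain y' where y': "y' \<in> Y'" by blast
    have "Y' = {y'}"
      using fmod_retract_of_cyclic_subsingleton[of Y' x y \<phi>s \<psi>s \<phi>r \<psi>r] rs rr inv(2) part y' by auto
    with part show ?thesis by (simp add: Z_eq xi_simple_module_singleton)
  next
    assume part: "X' \<noteq> {} \<and> Y' = {}"
    then obtain x' where x': "x' \<in> X'" by blast
    have hs: "lie_hom_on X' {x} \<phi>s" and hr: "lie_hom_on {x} X' \<phi>r"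
      using rs rr by (simp_all add: rep_hom_def)
    have "X' = {x'}" using lie_retract_of_singleton_subsingleton[OF hs hr inv(1)] x' by blast
    with part show ?thesis by (simp add: Z_eq xi_simple_lie_singleton)
  qed
qed

lemma cyclic_if_xi_cyclic_type:
  fixes K :: "'k::field itself"
  assumes A: "(X, Y) \<in> xi_obj X0 Y0" and x0: "x0 \<in> X0" and y0: "y0 \<in> Y0"
    and cyc: "xi_cyclic_type K X0 Y0 (X, Y)"
  shows "cyclic (X, Y)"
proof -
  have ne: "X \<noteq> {}" "Y \<noteq> {}"
    using cyc xi_full_iff[OF A x0 y0] unfolding xi_cyclic_type_def by auto
  have L: "(X, {}) \<in> xi_obj X0 Y0" and M: "({}, Y) \<in> xi_obj X0 Y0"
    using xi_obj_subset[OF A] by auto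
  have "xi_simple K X0 Y0 (X, {})"
    using cyc L xi_retract_lie_part[OF A] xi_zero_iff[OF L] xi_full_iff[OF L x0 y0] ne
    unfolding xi_cyclic_type_def by auto
  then have "\<exists>x. X = {x}"
    using ne(1) not_xi_simple_lie_part[OF L] by blast
  moreover have "xi_simple K X0 Y0 ({}, Y)"
    using cyc M xi_retract_module_part[OF A] xi_zero_iff[OF M] xi_full_iff[OF M x0 y0] ne
    unfolding xi_cyclic_type_def by auto
  then have "\<exists>y. Y = {y}"
    using ne(2) not_xi_simple_module_part[OF M] by blast
  ultimately show ?thesis by (auto simp: cyclic_def)
qed

section \<open>Invariance under isomorphisms of \<open>\<Xi>\<^sup>0\<close>\<close>

lemma xi_functor_obj: "xi_functor X0 Y0 Fo Fm \<Longrightarrow> A \<in> xi_obj X0 Y0 \<Longrightarrow> Fo A \<in> xi_obj X0 Y0"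
  unfolding xi_functor_def by blast

lemma xi_functor_hom:
  "xi_functor X0 Y0 Fo Fm \<Longrightarrow> A \<in> xi_obj X0 Y0 \<Longrightarrow> B \<in> xi_obj X0 Y0 \<Longrightarrow> f \<in> xi_hom X0 Y0 A B \<Longrightarrow>
     Fm f \<in> xi_hom X0 Y0 (Fo A) (Fo B)"
  unfolding xi_functor_def by blast

lemma xi_functor_id: "xi_functor X0 Y0 Fo Fm \<Longrightarrow> A \<in> xi_obj X0 Y0 \<Longrightarrow> Fm (xi_id A) = xi_id (Fo A)"
  unfolding xi_functor_def by blast

lemma xi_functor_comp:
  "xi_functor X0 Y0 Fo Fm \<Longrightarrow> A \<in> xi_obj X0 Y0 \<Longrightarrow> B \<in> xi_obj X0 Y0 \<Longrightarrow> C \<in> xi_obj X0 Y0 \<Longrightarrow>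
     f \<in> xi_hom X0 Y0 A B \<Longrightarrow> g \<in> xi_hom X0 Y0 B C \<Longrightarrow> Fm (xi_comp g f) = xi_comp (Fm g) (Fm f)"
  unfolding xi_functor_def by blast

lemma xi_hom_subset_mor: "f \<in> xi_hom X0 Y0 A B \<Longrightarrow> f \<in> xi_mor X0 Y0"
  unfolding xi_mor_def xi_hom_def by blast

locale xi_isomorphism =
  fixes X0 :: "'a set" and Y0 :: "'b set"
    and Fo Go :: "('a,'b) xobj \<Rightarrow> ('a,'b) xobj"
    and Fm Gm :: "('a,'b,'k::field) xmor \<Rightarrow> ('a,'b,'k) xmor"
  assumes F: "xi_functor X0 Y0 Fo Fm" and G: "xi_functor X0 Y0 Go Gm"
    and GF_obj: "A \<in> xi_obj X0 Y0 \<Longrightarrow> Go (Fo A) = A"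
    and FG_obj: "A \<in> xi_obj X0 Y0 \<Longrightarrow> Fo (Go A) = A"
    and GF_mor: "f \<in> xi_mor X0 Y0 \<Longrightarrow> Gm (Fm f) = f"
    and FG_mor: "f \<in> xi_mor X0 Y0 \<Longrightarrow> Fm (Gm f) = f"
begin

lemma inverse: "xi_isomorphism X0 Y0 Go Fo Gm Fm"
  by unfold_locales (simp_all add: F G GF_obj FG_obj GF_mor FG_mor)

lemma hom_preimage:
  assumes A: "A \<in> xi_obj X0 Y0" and B: "B \<in> xi_obj X0 Y0" and f: "f \<in> xi_hom X0 Y0 (Fo A) (Fo B)"
  shows "Gm f \<in> xi_hom X0 Y0 A B" and "Fm (Gm f) = f"
  using xi_functor_hom[OF G xi_functor_obj[OF F A] xi_functor_obj[OF F B] f] GF_obj[OF A] GF_obj[OF B]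
    FG_mor[OF xi_hom_subset_mor[OF f]]
  by simp_all

lemma unique_hom_image:
  assumes A: "A \<in> xi_obj X0 Y0" and B: "B \<in> xi_obj X0 Y0"
    and "xi_unique_hom TYPE('k) X0 Y0 A B"
  shows "xi_unique_hom TYPE('k) X0 Y0 (Fo A) (Fo B)"
  using assms(3) hom_preimage[OF A B] unfolding xi_unique_hom_def by metis

lemma zero_image:
  "A \<in> xi_obj X0 Y0 \<Longrightarrow> xi_zero TYPE('k) X0 Y0 A \<Longrightarrow> xi_zero TYPE('k) X0 Y0 (Fo A)"
  unfolding xi_zero_def by (rule unique_hom_image)

lemma retract_image:
  assumes Z: "Z \<in> xi_obj X0 Y0" and A: "A \<in> xi_obj X0 Y0" and "xi_retract TYPE('k) X0 Y0 Z A"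
  shows "xi_retract TYPE('k) X0 Y0 (Fo Z) (Fo A)"
proof -
  from assms(3) obtain s r where s: "s \<in> (xi_hom X0 Y0 Z A :: ('a,'b,'k) xmor set)"
    and r: "r \<in> xi_hom X0 Y0 A Z" and rs: "xi_comp r s = xi_id Z"
    unfolding xi_retract_def by blast
  have "xi_comp (Fm r) (Fm s) = xi_id (Fo Z)"
    using xi_functor_comp[OF F Z A Z s r] xi_functor_id[OF F Z] rs by simp
  then show ?thesis
    unfolding xi_retract_def using xi_functor_hom[OF F Z A s] xi_functor_hom[OF F A Z r] by blast
qed

lemma full_image:
  assumes A: "A \<in> xi_obj X0 Y0" and full: "xi_full TYPE('k) X0 Y0 A"
  shows "xi_full TYPE('k) X0 Y0 (Fo A)"
  unfolding xi_full_def
proof (intro conjI ballI impI)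
  show "\<not> xi_zero TYPE('k) X0 Y0 (Fo A)"
    using full xi_isomorphism.zero_image[OF inverse xi_functor_obj[OF F A]] GF_obj[OF A]
    unfolding xi_full_def by auto
  fix B assume B: "B \<in> xi_obj X0 Y0" and "xi_unique_hom TYPE('k) X0 Y0 (Fo A) B"
  then have "xi_unique_hom TYPE('k) X0 Y0 (Fo A) (Fo (Go B))" by (simp add: FG_obj)
  then have "xi_unique_hom TYPE('k) X0 Y0 A (Go B)"
    using xi_isomorphism.unique_hom_image[OF inverse xi_functor_obj[OF F A] xi_functor_obj[OF F xi_functor_obj[OF G B]]]
    by (simp add: GF_obj A xi_functor_obj[OF G B])
  then have "xi_zero TYPE('k) X0 Y0 (Go B)" using full xi_functor_obj[OF G B] unfolding xi_full_def by blast
  then show "xi_zero TYPE('k) X0 Y0 B" using zero_image[OF xi_functor_obj[OF G B]] by (simp add: FG_obj B)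
qed

lemma simple_image:
  assumes Z: "Z \<in> xi_obj X0 Y0" and simple: "xi_simple TYPE('k) X0 Y0 Z"
  shows "xi_simple TYPE('k) X0 Y0 (Fo Z)"
  unfolding xi_simple_def
proof (intro ballI impI)
  fix W' s' r'
  assume W': "W' \<in> xi_obj X0 Y0" and s': "s' \<in> (xi_hom X0 Y0 W' (Fo Z) :: ('a,'b,'k) xmor set)"
    and r': "r' \<in> xi_hom X0 Y0 (Fo Z) W'" and rs': "xi_comp r' s' = xi_id W'"
  define W where "W = Go W'"
  have W: "W \<in> xi_obj X0 Y0" and FW: "Fo W = W'" using W' by (simp_all add: W_def xi_functor_obj[OF G] FG_obj)
  have s: "Gm s' \<in> xi_hom X0 Y0 W Z" and Fs: "Fm (Gm s') = s'"
    using hom_preimage[OF W Z] s' FW by auto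
  have r: "Gm r' \<in> xi_hom X0 Y0 Z W" and Fr: "Fm (Gm r') = r'"
    using hom_preimage[OF Z W] r' FW by auto
  have "xi_comp (Gm r') (Gm s') = xi_id W"
    using xi_functor_comp[OF G W' xi_functor_obj[OF F Z] W' s' r'] xi_functor_id[OF G W'] rs'
      GF_obj[OF Z] by (simp add: W_def)
  then have "xi_zero TYPE('k) X0 Y0 W \<or> xi_comp (Gm s') (Gm r') = xi_id Z"
    using simple W s r unfolding xi_simple_def by blast
  then show "xi_zero TYPE('k) X0 Y0 W' \<or> xi_comp s' r' = xi_id (Fo Z)"
  proof
    assume "xi_zero TYPE('k) X0 Y0 W"
    then show ?thesis using zero_image[OF W] FW by simp
  next
    assume "xi_comp (Gm s') (Gm r') = xi_id Z"
    then show ?thesis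
      using xi_functor_comp[OF F Z W Z r s] xi_functor_id[OF F Z] Fs Fr by simp
  qed
qed

lemma cyclic_type_image:
  assumes A: "A \<in> xi_obj X0 Y0" and cyc: "xi_cyclic_type TYPE('k) X0 Y0 A"
  shows "xi_cyclic_type TYPE('k) X0 Y0 (Fo A)"
  unfolding xi_cyclic_type_def
proof (intro conjI ballI impI)
  show "xi_full TYPE('k) X0 Y0 (Fo A)"
    using cyc full_image[OF A] unfolding xi_cyclic_type_def by blast
  fix Z' assume Z': "Z' \<in> xi_obj X0 Y0"
    and h: "xi_retract TYPE('k) X0 Y0 Z' (Fo A) \<and> \<not> xi_zero TYPE('k) X0 Y0 Z' \<and> \<not> xi_full TYPE('k) X0 Y0 Z'"
  define Z where "Z = Go Z'"
  have Z: "Z \<in> xi_obj X0 Y0" and FZ: "Fo Z = Z'" using Z' by (simp_all add: Z_def xi_functor_obj[OF G] FG_obj)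
  have "xi_retract TYPE('k) X0 Y0 Z A"
    using xi_isomorphism.retract_image[OF inverse Z' xi_functor_obj[OF F A]] h GF_obj[OF A]
    by (simp add: Z_def)
  moreover have "\<not> xi_zero TYPE('k) X0 Y0 Z" using zero_image[OF Z] h FZ by auto
  moreover have "\<not> xi_full TYPE('k) X0 Y0 Z" using full_image[OF Z] h FZ by auto
  ultimately have "xi_simple TYPE('k) X0 Y0 Z" using cyc Z unfolding xi_cyclic_type_def by blast
  then show "xi_simple TYPE('k) X0 Y0 Z'" using simple_image[OF Z] FZ by simp
qed

end

theorem proposition6:
  fixes X0 :: "'a set" and Y0 :: "'b set"
    and Fo :: "('a,'b) xobj \<Rightarrow> ('a,'b) xobj"
    and Fm :: "('a,'b,'k::field_char_0) xmor \<Rightarrow> ('a,'b,'k) xmor"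
  assumes "countable X0" "infinite X0" "countable Y0" "infinite Y0"
    and "infinite (UNIV :: 'k set)"
    and "A \<in> xi_obj X0 Y0" "cyclic A"
    and "xi_automorphism X0 Y0 Fo Fm"
  shows "Fo A \<in> xi_obj X0 Y0 \<and> cyclic (Fo A)"
proof -
  from assms(8) obtain Go Gm where iso: "xi_isomorphism X0 Y0 Fo Go Fm Gm"
    unfolding xi_automorphism_def xi_isomorphism_def by blast
  obtain x0 y0 where x0: "x0 \<in> X0" and y0: "y0 \<in> Y0"
    using assms(2,4) by (metis ex_in_conv finite.emptyI)
  obtain x y where A: "A = ({x}, {y})" using assms(7) unfolding cyclic_def by blast
  have FA: "Fo A \<in> xi_obj X0 Y0"
    using xi_functor_obj[OF xi_isomorphism.F[OF iso] assms(6)] .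
  have "xi_cyclic_type TYPE('k) X0 Y0 A"
    using xi_cyclic_type_cyclic[of x y X0 Y0 "TYPE('k)"] assms(6) A by simp
  then have "xi_cyclic_type TYPE('k) X0 Y0 (Fo A)"
    by (rule xi_isomorphism.cyclic_type_image[OF iso assms(6)])
  then have "cyclic (fst (Fo A), snd (Fo A))"
    using cyclic_if_xi_cyclic_type[of "fst (Fo A)" "snd (Fo A)" X0 Y0 x0 y0] FA x0 y0 by simp
  with FA show ?thesis by simp
qed

end
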